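(* Use the parameter choice below with $t_0^\theta\ge a(\kappa^2+b)$, and define the deterministic sequence $g_0:=-f_\rho$, $g_t:=\big[I-\gamma_t(L_K+\lambda_tI)\big]g_{t-1}-\gamma_t\lambda_tf_\rho$ for $t\ge1$. Then for all $t\ge0$: (A) $\|g_t\|_\rho\le M_\rho$; (B) $g_t+f_\rho\in\mathscr H_K$ and $\|g_t+f_\rho\|_K\le3M_\rho/\sqrt{\lambda_t}$.
   Context: Setting. $\mathscr X\subseteq\mathbb R^n$ is closed, $\mathscr Y=\mathbb R$, $\mathscr Z=\mathscr X\times\mathscr Y$, and $\rho$ is a Borel probability measure on $\mathscr Z$ with marginal $\rho_{\mathscr X}$ on $\mathscr X$ and conditional distributions $\rho_{\mathscr Y|x}$; the regression function is $f_\rho(x)=\int_{\mathscr Y}y\,d\rho_{\mathscr Y|x}(y)$. It is assumed that $\operatorname{supp}\rho\subseteq\mathscr X\times[-M_\rho,M_\rho]$ for a constant $M_\rho\ge0$. $K:\mathscr X\times\mathscr X\to\mathbb R$ is a Mercer kernel (continuous, symmetric, positive semidefinite) with $\kappa:=\sup_{x\in\mathscr X}\sqrt{K(x,x)}<\infty$; $K_x:=K(x,\cdot)$; $\mathscr H_K$ is the associated reproducing kernel Hilbert space with norm $\|\cdot\|_K$. $\|\cdot\|_\rho$ is the norm of $L^2_{\rho_{\mathscr X}}$. $L_Kf(x)=\int_{\mathscr X}K(x,u)f(u)\,d\rho_{\mathscr X}(u)$; as an operator on $L^2_{\rho_{\mathscr X}}$ it is compact, positive and self-adjoint, and all its eigenvalues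 are assumed positive. Parameter choice. For $\theta\in[0,1]$, $t_0>0$, $a\in(0,t_0^\theta)$, $b\in(0,t_0^{1-\theta})$ put $\bar t:=t+t_0$, $\gamma_t=a\bar t^{-\theta}$ and $\lambda_t=b\bar t^{-(1-\theta)}$ for $t\ge0$. *)

theory Defs
  imports "HOL-Probability.Probability"
begin

text \<open>A finite combination sum_i c_i K_{x_i} is represented by a list of pairs (c_i, x_i).\<close>

definition kcomb_fun :: "('a \<Rightarrow> 'a \<Rightarrow> real) \<Rightarrow> (real \<times> 'a) list \<Rightarrow> 'a \<Rightarrow> real" where
  "kcomb_fun K cs = (\<lambda>x. (\<Sum>(c,u)\<leftarrow>cs. c * K u x))"

definition kcomb_sq :: "('a \<Rightarrow> 'a \<Rightarrow> real) \<Rightarrow> (real \<times> 'a) list \<Rightarrow> real" where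
  "kcomb_sq K cs = (\<Sum>(c,u)\<leftarrow>cs. \<Sum>(d,v)\<leftarrow>cs. c * d * K u v)"

definition kcomb_neg :: "(real \<times> 'a) list \<Rightarrow> (real \<times> 'a) list" where
  "kcomb_neg cs = map (\<lambda>(c,u). (- c, u)) cs"

definition rkhs_approx :: "('a \<Rightarrow> 'a \<Rightarrow> real) \<Rightarrow> 'a set \<Rightarrow> ('a \<Rightarrow> real) \<Rightarrow> (nat \<Rightarrow> (real \<times> 'a) list) \<Rightarrow> bool" where
  "rkhs_approx K X f S \<longleftrightarrow>
     (\<forall>n. snd ` set (S n) \<subseteq> X) \<and>
     (\<forall>e>0. \<exists>N. \<forall>m\<ge>N. \<forall>n\<ge>N. kcomb_sq K (S m @ kcomb_neg (S n)) < e) \<and>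
     (\<forall>x\<in>X. (\<lambda>n. kcomb_fun K (S n) x) \<longlonglongrightarrow> f x)"

definition in_rkhs :: "('a \<Rightarrow> 'a \<Rightarrow> real) \<Rightarrow> 'a set \<Rightarrow> ('a \<Rightarrow> real) \<Rightarrow> bool" where
  "in_rkhs K X f \<longleftrightarrow> (\<exists>S. rkhs_approx K X f S)"

definition rkhs_norm :: "('a \<Rightarrow> 'a \<Rightarrow> real) \<Rightarrow> 'a set \<Rightarrow> ('a \<Rightarrow> real) \<Rightarrow> real" where
  "rkhs_norm K X f = (THE L. \<exists>S. rkhs_approx K X f S \<and> (\<lambda>n. sqrt (kcomb_sq K (S n))) \<longlonglongrightarrow> L)"

definition mercer_kernel :: "('a::topological_space \<Rightarrow> 'a \<Rightarrow> real) \<Rightarrow> 'a set \<Rightarrow> bool" where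
  "mercer_kernel K X \<longleftrightarrow>
     continuous_on (X \<times> X) (\<lambda>(x,y). K x y) \<and>
     (\<forall>x\<in>X. \<forall>y\<in>X. K x y = K y x) \<and>
     (\<forall>cs. snd ` set cs \<subseteq> X \<longrightarrow> 0 \<le> kcomb_sq K cs)"

definition kappa :: "('a \<Rightarrow> 'a \<Rightarrow> real) \<Rightarrow> 'a set \<Rightarrow> real" where
  "kappa K X = (SUP x\<in>X. sqrt (K x x))"

definition marginal :: "('a::euclidean_space \<times> real) measure \<Rightarrow> 'a set \<Rightarrow> 'a measure" where
  "marginal rho X = restrict_space (distr rho borel fst) X"

definition regr :: "('a \<Rightarrow> real measure) \<Rightarrow> 'a \<Rightarrow> real" where
  "regr condY x = (\<integral>y. y \<partial>condY x)"

definition LK :: "('a \<Rightarrow> 'a \<Rightarrow> real) \<Rightarrow> 'a measure \<Rightarrow> ('a \<Rightarrow> real) \<Rightarrow> 'a \<Rightarrow> real" where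
  "LK K rhoX f = (\<lambda>x. \<integral>u. K x u * f u \<partial>rhoX)"

definition L2norm :: "'a measure \<Rightarrow> ('a \<Rightarrow> real) \<Rightarrow> real" where
  "L2norm rhoX g = sqrt (\<integral>x. (g x)\<^sup>2 \<partial>rhoX)"

definition gam :: "real \<Rightarrow> real \<Rightarrow> real \<Rightarrow> nat \<Rightarrow> real" where
  "gam a \<theta> t0 t = a * (real t + t0) powr (- \<theta>)"

definition lam :: "real \<Rightarrow> real \<Rightarrow> real \<Rightarrow> nat \<Rightarrow> real" where
  "lam b \<theta> t0 t = b * (real t + t0) powr (- (1 - \<theta>))"

primrec gseq :: "('a \<Rightarrow> 'a \<Rightarrow> real) \<Rightarrow> 'a measure \<Rightarrow> ('a \<Rightarrow> real) \<Rightarrow> (nat \<Rightarrow> real) \<Rightarrow> (nat \<Rightarrow> real)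
                  \<Rightarrow> nat \<Rightarrow> 'a \<Rightarrow> real" where
  "gseq K rhoX f gm lm 0 = (\<lambda>x. - f x)"
| "gseq K rhoX f gm lm (Suc t) =
     (\<lambda>x. gseq K rhoX f gm lm t x
          - gm (Suc t) * (LK K rhoX (gseq K rhoX f gm lm t) x + lm (Suc t) * gseq K rhoX f gm lm t x)
          - gm (Suc t) * lm (Suc t) * f x)"

end

theory Submission
  imports Defs
begin

text \<open>
  Besides g_t consider w_0 = 0, w_t = (1 - \<gamma>_t \<lambda>_t) w_(t-1) - \<gamma>_t g_(t-1); by induction
  g_t + f_\<rho> = L_K w_t. Since (L_K g x)^2 \<le> \<kappa>^2 <g, L_K g>_\<rho>, the step-size condition
  \<gamma>_t \<kappa>^2 \<le> 1 - \<gamma>_t \<lambda>_t makes g \<mapsto> (1 - \<gamma>_t \<lambda>_t) g - \<gamma>_t L_K g a contraction by the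
  factor 1 - \<gamma>_t \<lambda>_t in L^2(\<rho>_X). Inductively ||g_t||_\<rho> \<le> M and, as \<lambda>_t decreases,
  ||w_t||_\<rho> \<le> M / \<lambda>_t. Hence
  ||g_t + f_\<rho>||_K^2 = <w_t, L_K w_t>_\<rho> \<le> ||w_t||_\<rho> ||g_t + f_\<rho>||_\<rho> \<le> 2 M^2 / \<lambda>_t.

  As H_K is the Moore-Aronszajn completion of finite kernel combinations, L_K w has to be
  exhibited as a limit of such combinations: move the signed measure w \<rho>_X onto the nearest
  of the first n points of a dense sequence in X. Dominated convergence shows that these
  combinations form a Cauchy sequence converging pointwise to L_K w, with squared norms
  tending to <w, L_K w>_\<rho>.
\<close>

section \<open>Finite kernel combinations\<close>

lemma quadratic_nonneg_imp_discriminant_le: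
  fixes a b c :: real
  assumes nonneg: "\<And>t. 0 \<le> a + 2 * t * b + t\<^sup>2 * c" and c: "0 \<le> c"
  shows "b\<^sup>2 \<le> a * c"
proof (cases "c = 0")
  case True
  have "b = 0"
  proof (rule ccontr)
    assume "b \<noteq> 0"
    then have "a + 2 * (- (a + 1) / (2 * b)) * b = -1" by (simp add: field_simps)
    then show False using nonneg[of "- (a + 1) / (2 * b)"] True by simp
  qed
  then show ?thesis using nonneg[of 0] True by simp
next
  case False
  then have "0 < c" using c by simp
  have "a + 2 * (- b / c) * b + (- b / c)\<^sup>2 * c = a - b\<^sup>2 / c"
    using \<open>0 < c\<close> by (simp add: field_simps power2_eq_square)
  then have "b\<^sup>2 / c \<le> a" using nonneg[of "- b / c"] by simp
  then show ?thesis using \<open>0 < c\<close> by (simp add: pos_divide_le_eq mult.commute)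
qed

lemma tendsto_sum_list:
  fixes f :: "nat \<Rightarrow> 'b \<Rightarrow> real"
  assumes "\<And>x. x \<in> set xs \<Longrightarrow> (\<lambda>n. f n x) \<longlonglongrightarrow> l x"
  shows "(\<lambda>n. \<Sum>x\<leftarrow>xs. f n x) \<longlonglongrightarrow> (\<Sum>x\<leftarrow>xs. l x)"
  using assms by (induction xs) (auto intro!: tendsto_add)

definition kcomb_inner :: "('a \<Rightarrow> 'a \<Rightarrow> real) \<Rightarrow> (real \<times> 'a) list \<Rightarrow> (real \<times> 'a) list \<Rightarrow> real" where
  "kcomb_inner K A C = (\<Sum>(c,u)\<leftarrow>A. \<Sum>(d,w)\<leftarrow>C. c * d * K u w)"

definition kcomb_norm :: "('a \<Rightarrow> 'a \<Rightarrow> real) \<Rightarrow> (real \<times> 'a) list \<Rightarrow> real" where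
  "kcomb_norm K A = sqrt (kcomb_sq K A)"

definition kcomb_scale :: "real \<Rightarrow> (real \<times> 'a) list \<Rightarrow> (real \<times> 'a) list" where
  "kcomb_scale t A = map (\<lambda>(c,u). (t * c, u)) A"

lemma kcomb_sq_eq_inner: "kcomb_sq K A = kcomb_inner K A A"
  by (simp add: kcomb_sq_def kcomb_inner_def)

lemma kcomb_inner_append_left: "kcomb_inner K (A @ B) C = kcomb_inner K A C + kcomb_inner K B C"
  by (simp add: kcomb_inner_def)

lemma kcomb_inner_append_right: "kcomb_inner K A (B @ C) = kcomb_inner K A B + kcomb_inner K A C"
  by (simp add: kcomb_inner_def case_prod_unfold sum_list_addf)

lemma kcomb_inner_neg_left: "kcomb_inner K (kcomb_neg A) C = - kcomb_inner K A C"
  by (simp add: kcomb_inner_def kcomb_neg_def case_prod_unfold uminus_sum_list_map o_def)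

lemma kcomb_inner_neg_right: "kcomb_inner K A (kcomb_neg C) = - kcomb_inner K A C"
  by (simp add: kcomb_inner_def kcomb_neg_def case_prod_unfold uminus_sum_list_map o_def)

lemma kcomb_inner_scale_left: "kcomb_inner K (kcomb_scale t A) C = t * kcomb_inner K A C"
  by (induction A) (auto simp: kcomb_inner_def kcomb_scale_def case_prod_unfold sum_list_const_mult algebra_simps)

lemma kcomb_inner_scale_right: "kcomb_inner K A (kcomb_scale t C) = t * kcomb_inner K A C"
proof -
  have "(\<Sum>x\<leftarrow>kcomb_scale t C. c * fst x * K u (snd x)) = t * (\<Sum>x\<leftarrow>C. c * fst x * K u (snd x))" for c u
    by (induction C) (auto simp: kcomb_scale_def algebra_simps)
  then show ?thesis
    by (induction A) (auto simp: kcomb_inner_def case_prod_unfold algebra_simps)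
qed

lemma kcomb_inner_swap_sums: "kcomb_inner K A C = (\<Sum>(d,w)\<leftarrow>C. \<Sum>(c,u)\<leftarrow>A. c * d * K u w)"
  by (induction A) (simp_all add: kcomb_inner_def case_prod_unfold sum_list_addf)

lemma kcomb_inner_eq_sum_kcomb_fun: "kcomb_inner K A C = (\<Sum>(d,w)\<leftarrow>C. d * kcomb_fun K A w)"
  unfolding kcomb_inner_swap_sums kcomb_fun_def
  by (simp add: case_prod_unfold sum_list_const_mult[symmetric] algebra_simps)

lemma kcomb_sq_diff:
  "kcomb_sq K (A @ kcomb_neg C) = kcomb_inner K A A - kcomb_inner K A C - kcomb_inner K C A + kcomb_inner K C C"
  by (simp add: kcomb_sq_eq_inner kcomb_inner_append_left kcomb_inner_append_right
      kcomb_inner_neg_left kcomb_inner_neg_right)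

lemma kcomb_neg_neg [simp]: "kcomb_neg (kcomb_neg A) = A"
  by (induction A) (auto simp: kcomb_neg_def)

lemma kcomb_norm_neg: "kcomb_norm K (kcomb_neg A) = kcomb_norm K A"
  by (simp add: kcomb_norm_def kcomb_sq_eq_inner kcomb_inner_neg_left kcomb_inner_neg_right)

lemma kcomb_norm_diff_commute: "kcomb_norm K (C @ kcomb_neg A) = kcomb_norm K (A @ kcomb_neg C)"
  by (simp add: kcomb_norm_def kcomb_sq_diff)

lemma kcomb_norm_diff_add_cancel: "kcomb_norm K (A @ kcomb_neg C @ C) = kcomb_norm K A"
  by (simp add: kcomb_norm_def kcomb_sq_eq_inner kcomb_inner_append_left kcomb_inner_append_right
      kcomb_inner_neg_left kcomb_inner_neg_right)

lemma kcomb_fun_append: "kcomb_fun K (A @ B) x = kcomb_fun K A x + kcomb_fun K B x"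
  by (simp add: kcomb_fun_def)

lemma kcomb_fun_neg: "kcomb_fun K (kcomb_neg A) x = - kcomb_fun K A x"
  by (induction A) (auto simp: kcomb_fun_def kcomb_neg_def)

lemma centers_kcomb_scale [simp]: "snd ` set (kcomb_scale t A) = snd ` set A"
  by (force simp: kcomb_scale_def case_prod_unfold image_iff)

lemma centers_kcomb_neg [simp]: "snd ` set (kcomb_neg A) = snd ` set A"
  by (force simp: kcomb_neg_def case_prod_unfold image_iff)

lemma kcomb_inner_tendsto_zero:
  assumes "\<And>w. w \<in> snd ` set B \<Longrightarrow> (\<lambda>n. kcomb_fun K (D n) w) \<longlonglongrightarrow> 0"
  shows "(\<lambda>n. kcomb_inner K (D n) B) \<longlonglongrightarrow> 0"
proof -
  have "(\<lambda>n. \<Sum>x\<leftarrow>B. fst x * kcomb_fun K (D n) (snd x)) \<longlonglongrightarrow> (\<Sum>x\<leftarrow>B. fst x * 0)"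
    using assms by (intro tendsto_sum_list tendsto_mult tendsto_const) auto
  then show ?thesis by (simp add: kcomb_inner_eq_sum_kcomb_fun case_prod_unfold)
qed

locale psd_kernel =
  fixes K :: "'a \<Rightarrow> 'a \<Rightarrow> real" and X :: "'a set"
  assumes K_sym: "\<And>x y. x \<in> X \<Longrightarrow> y \<in> X \<Longrightarrow> K x y = K y x"
    and K_psd: "\<And>cs. snd ` set cs \<subseteq> X \<Longrightarrow> 0 \<le> kcomb_sq K cs"
begin

lemma kcomb_inner_commute:
  assumes A: "snd ` set A \<subseteq> X" and C: "snd ` set C \<subseteq> X"
  shows "kcomb_inner K A C = kcomb_inner K C A"
proof -
  have "(\<Sum>(c,u)\<leftarrow>A. c * d * K u w) = (\<Sum>(c,u)\<leftarrow>A. d * c * K w u)" if "(d, w) \<in> set C" for d w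
  proof (intro arg_cong[where f=sum_list] map_cong refl, clarify)
    fix c u assume "(c, u) \<in> set A"
    then show "c * d * K u w = d * c * K w u"
      using that A C by (force intro: K_sym simp: image_iff)
  qed
  then have "(\<Sum>(d,w)\<leftarrow>C. \<Sum>(c,u)\<leftarrow>A. c * d * K u w) = (\<Sum>(d,w)\<leftarrow>C. \<Sum>(c,u)\<leftarrow>A. d * c * K w u)"
    by (intro arg_cong[where f=sum_list] map_cong refl) auto
  also have "\<dots> = kcomb_inner K C A" by (simp only: kcomb_inner_def)
  finally show ?thesis by (simp only: kcomb_inner_swap_sums)
qed

lemma kcomb_inner_self_nonneg: "snd ` set A \<subseteq> X \<Longrightarrow> 0 \<le> kcomb_inner K A A"
  using K_psd by (simp add: kcomb_sq_eq_inner)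

lemma kcomb_norm_sq: "snd ` set A \<subseteq> X \<Longrightarrow> (kcomb_norm K A)\<^sup>2 = kcomb_inner K A A"
  using kcomb_inner_self_nonneg by (simp add: kcomb_norm_def kcomb_sq_eq_inner)

lemma kcomb_norm_nonneg: "snd ` set A \<subseteq> X \<Longrightarrow> 0 \<le> kcomb_norm K A"
  using K_psd by (simp add: kcomb_norm_def)

lemma kcomb_inner_Cauchy_Schwarz:
  assumes A: "snd ` set A \<subseteq> X" and C: "snd ` set C \<subseteq> X"
  shows "\<bar>kcomb_inner K A C\<bar> \<le> kcomb_norm K A * kcomb_norm K C"
proof -
  have "(kcomb_inner K A C)\<^sup>2 \<le> kcomb_inner K A A * kcomb_inner K C C"
  proof (rule quadratic_nonneg_imp_discriminant_le)
    fix t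
    have "0 \<le> kcomb_inner K (A @ kcomb_scale t C) (A @ kcomb_scale t C)"
      using A C by (intro kcomb_inner_self_nonneg) (simp add: image_Un)
    also have "\<dots> = kcomb_inner K A A + 2 * t * kcomb_inner K A C + t\<^sup>2 * kcomb_inner K C C"
      using kcomb_inner_commute[OF C A]
      by (simp add: kcomb_inner_append_left kcomb_inner_append_right kcomb_inner_scale_left
          kcomb_inner_scale_right power2_eq_square algebra_simps)
    finally show "0 \<le> kcomb_inner K A A + 2 * t * kcomb_inner K A C + t\<^sup>2 * kcomb_inner K C C" .
  qed (rule kcomb_inner_self_nonneg[OF C])
  then have "(kcomb_inner K A C)\<^sup>2 \<le> (kcomb_norm K A * kcomb_norm K C)\<^sup>2"
    using A C by (simp add: power_mult_distrib kcomb_norm_sq)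
  then show ?thesis
    using kcomb_norm_nonneg[OF A] kcomb_norm_nonneg[OF C] by (simp flip: abs_le_square_iff)
qed

lemma kcomb_norm_diff_le:
  assumes A: "snd ` set A \<subseteq> X" and C: "snd ` set C \<subseteq> X"
  shows "kcomb_norm K (A @ kcomb_neg C) \<le> kcomb_norm K A + kcomb_norm K C"
proof -
  have "(kcomb_norm K (A @ kcomb_neg C))\<^sup>2 = kcomb_sq K (A @ kcomb_neg C)"
    using A C K_psd[of "A @ kcomb_neg C"] by (simp add: kcomb_norm_def image_Un)
  also have "\<dots> = (kcomb_norm K A)\<^sup>2 - 2 * kcomb_inner K A C + (kcomb_norm K C)\<^sup>2"
    using A C kcomb_inner_commute[OF C A] by (simp add: kcomb_norm_sq kcomb_sq_diff)
  also have "\<dots> \<le> (kcomb_norm K A + kcomb_norm K C)\<^sup>2"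
    using abs_le_D2[OF kcomb_inner_Cauchy_Schwarz[OF A C]] unfolding power2_sum by linarith
  finally show ?thesis
    by (rule power2_le_imp_le) (intro add_nonneg_nonneg kcomb_norm_nonneg A C)
qed

lemma kcomb_norm_diff_ge:
  assumes A: "snd ` set A \<subseteq> X" and C: "snd ` set C \<subseteq> X"
  shows "\<bar>kcomb_norm K A - kcomb_norm K C\<bar> \<le> kcomb_norm K (A @ kcomb_neg C)"
proof -
  have "kcomb_norm K A \<le> kcomb_norm K (A @ kcomb_neg C) + kcomb_norm K C"
    using kcomb_norm_diff_le[of "A @ kcomb_neg C" "kcomb_neg C"] A C
    by (simp add: image_Un kcomb_norm_diff_add_cancel kcomb_norm_neg)
  moreover have "kcomb_norm K C \<le> kcomb_norm K (A @ kcomb_neg C) + kcomb_norm K A"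
    using kcomb_norm_diff_le[of "C @ kcomb_neg A" "kcomb_neg A"] A C kcomb_norm_diff_commute[of K C A]
    by (simp add: image_Un kcomb_norm_diff_add_cancel kcomb_norm_neg)
  ultimately show ?thesis by linarith
qed

lemma kcomb_fun_sq_le:
  assumes A: "snd ` set A \<subseteq> X" and y: "y \<in> X"
  shows "(kcomb_fun K A y)\<^sup>2 \<le> K y y * kcomb_sq K A"
proof -
  have "\<bar>kcomb_inner K A [(1,y)]\<bar> \<le> kcomb_norm K A * kcomb_norm K [(1,y)]"
    using A y by (intro kcomb_inner_Cauchy_Schwarz) auto
  then have "\<bar>kcomb_inner K A [(1,y)]\<bar> \<le> \<bar>kcomb_norm K A * kcomb_norm K [(1,y)]\<bar>"
    by linarith
  then have "(kcomb_inner K A [(1,y)])\<^sup>2 \<le> (kcomb_norm K A)\<^sup>2 * (kcomb_norm K [(1,y)])\<^sup>2"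
    by (simp only: abs_le_square_iff power_mult_distrib)
  moreover have "kcomb_inner K A [(1,y)] = kcomb_fun K A y"
    by (simp add: kcomb_inner_eq_sum_kcomb_fun)
  moreover have "(kcomb_norm K [(1,y)])\<^sup>2 = K y y"
    using y by (simp add: kcomb_norm_sq kcomb_inner_def)
  moreover have "(kcomb_norm K A)\<^sup>2 = kcomb_sq K A"
    using A by (simp add: kcomb_norm_sq kcomb_sq_eq_inner)
  ultimately show ?thesis by (simp add: mult.commute)
qed

end

section \<open>The reproducing kernel Hilbert space\<close>

lemma rkhs_approx_cong:
  assumes "\<And>x. x \<in> X \<Longrightarrow> F x = G x"
  shows "rkhs_approx K X F = rkhs_approx K X G"
  using assms by (intro ext) (simp add: rkhs_approx_def cong: ball_cong)

lemma in_rkhs_cong: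
  assumes "\<And>x. x \<in> X \<Longrightarrow> F x = G x"
  shows "in_rkhs K X F = in_rkhs K X G"
  using rkhs_approx_cong[OF assms, where K=K] by (simp add: in_rkhs_def)

lemma rkhs_norm_cong:
  assumes "\<And>x. x \<in> X \<Longrightarrow> F x = G x"
  shows "rkhs_norm K X F = rkhs_norm K X G"
  using rkhs_approx_cong[OF assms, where K=K] by (simp add: rkhs_norm_def)

lemma rkhs_approx_Cauchy:
  assumes "rkhs_approx K X F S" and "0 < e"
  obtains N where "\<And>m n. N \<le> m \<Longrightarrow> N \<le> n \<Longrightarrow> kcomb_norm K (S m @ kcomb_neg (S n)) < e"
proof -
  obtain N where N: "\<And>m n. N \<le> m \<Longrightarrow> N \<le> n \<Longrightarrow> kcomb_sq K (S m @ kcomb_neg (S n)) < e\<^sup>2"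
    using assms unfolding rkhs_approx_def by (meson zero_less_power)
  have "kcomb_norm K (S m @ kcomb_neg (S n)) < e" if "N \<le> m" "N \<le> n" for m n
    using real_sqrt_less_mono[OF N[OF that]] \<open>0 < e\<close> by (simp add: kcomb_norm_def)
  then show ?thesis by (rule that)
qed

lemma kcomb_sq_diff_diff:
  "kcomb_sq K ((A @ kcomb_neg B) @ kcomb_neg (C @ kcomb_neg D))
   = kcomb_sq K ((A @ kcomb_neg C) @ kcomb_neg (B @ kcomb_neg D))"
  by (simp add: kcomb_sq_eq_inner kcomb_inner_append_left kcomb_inner_append_right
      kcomb_inner_neg_left kcomb_inner_neg_right algebra_simps)

context psd_kernel
begin

lemma rkhs_approx_zero_norm_tendsto:
  assumes D: "rkhs_approx K X (\<lambda>_. 0) D"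
  shows "(\<lambda>n. kcomb_norm K (D n)) \<longlonglongrightarrow> 0"
proof (rule LIMSEQ_I)
  fix r :: real assume "0 < r"
  define e where "e = r / 2"
  have e: "0 < e" using \<open>0 < r\<close> by (simp add: e_def)
  have cD: "snd ` set (D n) \<subseteq> X" for n using D by (simp add: rkhs_approx_def)
  obtain N where N: "\<And>m n. N \<le> m \<Longrightarrow> N \<le> n \<Longrightarrow> kcomb_norm K (D m @ kcomb_neg (D n)) < e"
    using rkhs_approx_Cauchy[OF D e] by blast
  txt \<open>||D_n||^2 = <D_n, D_n - D_N> + <D_n, D_N>, where the last term tends to 0 pointwise.\<close>
  have "(\<lambda>n. kcomb_inner K (D n) (D N)) \<longlonglongrightarrow> 0"
  proof (rule kcomb_inner_tendsto_zero)
    fix w assume "w \<in> snd ` set (D N)"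
    then have "w \<in> X" using cD by blast
    then show "(\<lambda>n. kcomb_fun K (D n) w) \<longlonglongrightarrow> 0" using D by (simp add: rkhs_approx_def)
  qed
  then obtain N' where N': "\<And>n. N' \<le> n \<Longrightarrow> \<bar>kcomb_inner K (D n) (D N)\<bar> < e\<^sup>2"
    using LIMSEQ_D[of _ 0 "e\<^sup>2"] e by (metis diff_zero real_norm_def zero_less_power)
  have "kcomb_norm K (D n) < r" if n: "max N N' \<le> n" for n
  proof -
    define x where "x = kcomb_norm K (D n)"
    have x0: "0 \<le> x" using kcomb_norm_nonneg[OF cD] by (simp add: x_def)
    have "x\<^sup>2 = kcomb_inner K (D n) (D n @ kcomb_neg (D N)) + kcomb_inner K (D n) (D N)"
      using cD by (simp add: x_def kcomb_norm_sq kcomb_inner_append_right kcomb_inner_neg_right)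
    also have "\<dots> < x * e + e\<^sup>2"
    proof -
      have "kcomb_inner K (D n) (D n @ kcomb_neg (D N)) \<le> x * kcomb_norm K (D n @ kcomb_neg (D N))"
        using kcomb_inner_Cauchy_Schwarz[of "D n" "D n @ kcomb_neg (D N)"] cD
        by (simp add: x_def image_Un)
      also have "\<dots> \<le> x * e" using N[of n N] n x0 by (intro mult_left_mono) auto
      finally show ?thesis using N'[of n] n by linarith
    qed
    finally have "x\<^sup>2 < x * e + e\<^sup>2" .
    have "x < 2 * e"
    proof (rule ccontr)
      assume "\<not> x < 2 * e"
      then have "x * (2 * e) \<le> x * x" "e * (2 * e) \<le> e * x"
        using x0 e by (auto intro: mult_left_mono)
      moreover have "0 < e * e" using e by simp
      ultimately show False using \<open>x\<^sup>2 < x * e + e\<^sup>2\<close> by (simp add: power2_eq_square algebra_simps)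
    qed
    then show ?thesis by (simp add: x_def e_def)
  qed
  then show "\<exists>no. \<forall>n\<ge>no. norm (kcomb_norm K (D n) - 0) < r"
    using kcomb_norm_nonneg[OF cD] by (metis abs_of_nonneg diff_zero max.bounded_iff real_norm_def)
qed

lemma rkhs_approx_diff:
  assumes S: "rkhs_approx K X F S" and T: "rkhs_approx K X G T"
  shows "rkhs_approx K X (\<lambda>x. F x - G x) (\<lambda>n. S n @ kcomb_neg (T n))"
  unfolding rkhs_approx_def
proof (intro conjI allI impI ballI)
  have cS: "snd ` set (S n) \<subseteq> X" and cT: "snd ` set (T n) \<subseteq> X" for n
    using S T by (auto simp: rkhs_approx_def)
  then show "snd ` set (S n @ kcomb_neg (T n)) \<subseteq> X" for n by (simp add: image_Un)
  show "(\<lambda>n. kcomb_fun K (S n @ kcomb_neg (T n)) x) \<longlonglongrightarrow> F x - G x" if "x \<in> X" for x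
    using S T that by (auto simp: rkhs_approx_def kcomb_fun_append kcomb_fun_neg intro: tendsto_diff)
  fix e :: real assume "0 < e"
  then have e: "0 < sqrt e / 2" by simp
  obtain N1 where N1: "\<And>m n. N1 \<le> m \<Longrightarrow> N1 \<le> n \<Longrightarrow> kcomb_norm K (S m @ kcomb_neg (S n)) < sqrt e / 2"
    using rkhs_approx_Cauchy[OF S e] by blast
  obtain N2 where N2: "\<And>m n. N2 \<le> m \<Longrightarrow> N2 \<le> n \<Longrightarrow> kcomb_norm K (T m @ kcomb_neg (T n)) < sqrt e / 2"
    using rkhs_approx_Cauchy[OF T e] by blast
  have "kcomb_sq K ((S m @ kcomb_neg (T m)) @ kcomb_neg (S n @ kcomb_neg (T n))) < e"
    if "max N1 N2 \<le> m" "max N1 N2 \<le> n" for m n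
  proof -
    define A where "A = S m @ kcomb_neg (S n)"
    define B where "B = T m @ kcomb_neg (T n)"
    have cA: "snd ` set A \<subseteq> X" and cB: "snd ` set B \<subseteq> X"
      using cS cT by (simp_all add: A_def B_def image_Un)
    have "kcomb_sq K ((S m @ kcomb_neg (T m)) @ kcomb_neg (S n @ kcomb_neg (T n)))
        = kcomb_sq K (A @ kcomb_neg B)"
      unfolding A_def B_def by (rule kcomb_sq_diff_diff)
    also have "\<dots> = (kcomb_norm K (A @ kcomb_neg B))\<^sup>2"
      using cA cB K_psd[of "A @ kcomb_neg B"] by (simp add: kcomb_norm_def image_Un)
    also have "\<dots> \<le> (kcomb_norm K A + kcomb_norm K B)\<^sup>2"
      using cA cB by (intro power_mono kcomb_norm_diff_le) (auto simp: image_Un kcomb_norm_nonneg)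
    also have "\<dots> < (sqrt e)\<^sup>2"
      using N1[of m n] N2[of m n] that kcomb_norm_nonneg[OF cA] kcomb_norm_nonneg[OF cB]
      by (intro power_strict_mono) (auto simp: A_def B_def)
    finally show ?thesis using \<open>0 < e\<close> by simp
  qed
  then show "\<exists>N. \<forall>m\<ge>N. \<forall>n\<ge>N. kcomb_sq K ((S m @ kcomb_neg (T m)) @ kcomb_neg (S n @ kcomb_neg (T n))) < e"
    by blast
qed

lemma rkhs_norm_eq:
  assumes S: "rkhs_approx K X F S" and L: "(\<lambda>n. kcomb_norm K (S n)) \<longlonglongrightarrow> L"
  shows "rkhs_norm K X F = L"
  unfolding rkhs_norm_def kcomb_norm_def[symmetric]
proof (rule the_equality)
  show "\<exists>S. rkhs_approx K X F S \<and> (\<lambda>n. kcomb_norm K (S n)) \<longlonglongrightarrow> L" using S L by blast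
  fix L' assume "\<exists>S. rkhs_approx K X F S \<and> (\<lambda>n. kcomb_norm K (S n)) \<longlonglongrightarrow> L'"
  then obtain S' where S': "rkhs_approx K X F S'" and L': "(\<lambda>n. kcomb_norm K (S' n)) \<longlonglongrightarrow> L'"
    by blast
  have "rkhs_approx K X (\<lambda>_. 0) (\<lambda>n. S n @ kcomb_neg (S' n))"
    using rkhs_approx_diff[OF S S'] rkhs_approx_cong[of X "\<lambda>x. F x - F x" "\<lambda>_. 0"] by simp
  then have zero: "(\<lambda>n. kcomb_norm K (S n @ kcomb_neg (S' n))) \<longlonglongrightarrow> 0"
    by (rule rkhs_approx_zero_norm_tendsto)
  have bound: "norm (kcomb_norm K (S n) - kcomb_norm K (S' n)) \<le> kcomb_norm K (S n @ kcomb_neg (S' n))" for n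
  proof -
    have "snd ` set (S n) \<subseteq> X" "snd ` set (S' n) \<subseteq> X"
      using S S' unfolding rkhs_approx_def by blast+
    then show ?thesis unfolding real_norm_def by (rule kcomb_norm_diff_ge)
  qed
  have "(\<lambda>n. kcomb_norm K (S n) - kcomb_norm K (S' n)) \<longlonglongrightarrow> 0"
    using Lim_null_comparison[OF always_eventually[OF allI[OF bound]] zero] .
  moreover have "(\<lambda>n. kcomb_norm K (S n) - kcomb_norm K (S' n)) \<longlonglongrightarrow> L - L'"
    using L L' by (rule tendsto_diff)
  ultimately show "L' = L" using LIMSEQ_unique by fastforce
qed

end

section \<open>Square-integrable functions\<close>

definition square_integrable :: "'a measure \<Rightarrow> ('a \<Rightarrow> real) \<Rightarrow> bool" where
  "square_integrable M g \<longleftrightarrow> g \<in> borel_measurable M \<and> integrable M (\<lambda>x. (g x)\<^sup>2)"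

lemma square_integrable_mult:
  assumes f: "square_integrable M f" and g: "square_integrable M g"
  shows "integrable M (\<lambda>x. f x * g x)"
proof (rule Bochner_Integration.integrable_bound)
  show "integrable M (\<lambda>x. (f x)\<^sup>2 + (g x)\<^sup>2)" using f g by (auto simp: square_integrable_def)
  show "(\<lambda>x. f x * g x) \<in> borel_measurable M" using f g by (auto simp: square_integrable_def)
  have "\<bar>f x * g x\<bar> \<le> (f x)\<^sup>2 + (g x)\<^sup>2" for x
  proof -
    have "2 * \<bar>f x\<bar> * \<bar>g x\<bar> \<le> (f x)\<^sup>2 + (g x)\<^sup>2"
      using sum_squares_bound[of "\<bar>f x\<bar>" "\<bar>g x\<bar>"] by simp
    moreover have "0 \<le> \<bar>f x\<bar> * \<bar>g x\<bar>" by simp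
    ultimately show ?thesis unfolding abs_mult by linarith
  qed
  then show "AE x in M. norm (f x * g x) \<le> norm ((f x)\<^sup>2 + (g x)\<^sup>2)" by simp
qed

lemma square_integrable_add:
  assumes f: "square_integrable M f" and g: "square_integrable M g"
  shows "square_integrable M (\<lambda>x. f x + g x)"
proof -
  have "integrable M (\<lambda>x. (f x)\<^sup>2 + 2 * (f x * g x) + (g x)\<^sup>2)"
    using f g square_integrable_mult[OF f g] by (auto simp: square_integrable_def)
  then show ?thesis using f g by (auto simp: square_integrable_def power2_sum algebra_simps)
qed

lemma square_integrable_cmult: "square_integrable M f \<Longrightarrow> square_integrable M (\<lambda>x. c * f x)"
  by (auto simp: square_integrable_def power_mult_distrib)

lemma (in finite_measure) square_integrable_AE_bounded:
  assumes g: "g \<in> borel_measurable M" and bound: "AE x in M. \<bar>g x\<bar> \<le> B"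
  shows "square_integrable M g"
proof -
  have "integrable M (\<lambda>x. (g x)\<^sup>2)"
  proof (rule Bochner_Integration.integrable_bound[of M "\<lambda>_. B\<^sup>2"])
    show "AE x in M. norm ((g x)\<^sup>2) \<le> norm (B\<^sup>2)"
      using bound
    proof eventually_elim
      fix x assume "\<bar>g x\<bar> \<le> B"
      then have "\<bar>g x\<bar>\<^sup>2 \<le> B\<^sup>2" by (intro power_mono) auto
      then show "norm ((g x)\<^sup>2) \<le> norm (B\<^sup>2)" by simp
    qed
  qed (use g in auto)
  then show ?thesis using g by (simp add: square_integrable_def)
qed

lemma (in finite_measure) square_integrable_integrable: "square_integrable M g \<Longrightarrow> integrable M g"
  by (simp add: square_integrable_def square_integrable_imp_integrable)

lemma L2norm_nonneg: "0 \<le> L2norm M g"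
  by (simp add: L2norm_def)

lemma L2norm_sq: "(L2norm M g)\<^sup>2 = (\<integral>x. (g x)\<^sup>2 \<partial>M)"
  by (simp add: L2norm_def)

lemma L2norm_cmult: "L2norm M (\<lambda>x. c * f x) = \<bar>c\<bar> * L2norm M f"
  by (simp add: L2norm_def power_mult_distrib real_sqrt_mult)

lemma L2norm_cong: "(\<And>x. x \<in> space M \<Longrightarrow> f x = g x) \<Longrightarrow> L2norm M f = L2norm M g"
  unfolding L2norm_def by (metis (mono_tags, lifting) Bochner_Integration.integral_cong)

lemma L2norm_Cauchy_Schwarz:
  assumes f: "square_integrable M f" and g: "square_integrable M g"
  shows "\<bar>\<integral>x. f x * g x \<partial>M\<bar> \<le> L2norm M f * L2norm M g"
proof -
  have "(\<integral>x. f x * g x \<partial>M)\<^sup>2 \<le> (\<integral>x. (f x)\<^sup>2 \<partial>M) * (\<integral>x. (g x)\<^sup>2 \<partial>M)"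
  proof (rule quadratic_nonneg_imp_discriminant_le)
    fix t
    have "0 \<le> (\<integral>x. (f x + t * g x)\<^sup>2 \<partial>M)" by simp
    also have "\<dots> = (\<integral>x. (f x)\<^sup>2 + 2 * t * (f x * g x) + t\<^sup>2 * (g x)\<^sup>2 \<partial>M)"
      by (simp add: power2_eq_square algebra_simps)
    also have "\<dots> = (\<integral>x. (f x)\<^sup>2 \<partial>M) + 2 * t * (\<integral>x. f x * g x \<partial>M) + t\<^sup>2 * (\<integral>x. (g x)\<^sup>2 \<partial>M)"
      using f g square_integrable_mult[OF f g] by (simp add: square_integrable_def)
    finally show "0 \<le> (\<integral>x. (f x)\<^sup>2 \<partial>M) + 2 * t * (\<integral>x. f x * g x \<partial>M) + t\<^sup>2 * (\<integral>x. (g x)\<^sup>2 \<partial>M)" .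
  qed simp
  then have "(\<integral>x. f x * g x \<partial>M)\<^sup>2 \<le> (L2norm M f * L2norm M g)\<^sup>2"
    by (simp add: power_mult_distrib L2norm_sq)
  then show ?thesis
    using L2norm_nonneg[of M f] L2norm_nonneg[of M g] by (simp flip: abs_le_square_iff)
qed

lemma L2norm_triangle:
  assumes f: "square_integrable M f" and g: "square_integrable M g"
  shows "L2norm M (\<lambda>x. f x + g x) \<le> L2norm M f + L2norm M g"
proof -
  have "(L2norm M (\<lambda>x. f x + g x))\<^sup>2 = (\<integral>x. (f x)\<^sup>2 + 2 * (f x * g x) + (g x)\<^sup>2 \<partial>M)"
    by (simp add: L2norm_sq power2_sum algebra_simps)
  also have "\<dots> = (L2norm M f)\<^sup>2 + 2 * (\<integral>x. f x * g x \<partial>M) + (L2norm M g)\<^sup>2"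
    using f g square_integrable_mult[OF f g] by (simp add: square_integrable_def L2norm_sq)
  also have "\<dots> \<le> (L2norm M f + L2norm M g)\<^sup>2"
    using abs_le_D1[OF L2norm_Cauchy_Schwarz[OF f g]] unfolding power2_sum by linarith
  finally show ?thesis
    by (rule power2_le_imp_le) (intro add_nonneg_nonneg L2norm_nonneg)
qed

lemma (in prob_space) L2norm_le_AE_bound:
  assumes "square_integrable M f" "AE x in M. \<bar>f x\<bar> \<le> B" "0 \<le> B"
  shows "L2norm M f \<le> B"
proof (rule power2_le_imp_le)
  have "(\<integral>x. (f x)\<^sup>2 \<partial>M) \<le> (\<integral>x. B\<^sup>2 \<partial>M)"
  proof (rule integral_mono_AE)
    show "AE x in M. (f x)\<^sup>2 \<le> B\<^sup>2"
      using assms(2) by eventually_elim (metis abs_ge_zero power2_abs power_mono)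
  qed (use assms(1) in \<open>auto simp: square_integrable_def\<close>)
  then show "(L2norm M f)\<^sup>2 \<le> B\<^sup>2" by (simp add: L2norm_sq prob_space)
qed (rule assms(3))

section \<open>The integral operator\<close>

lemma integrable_mult_bounded:
  fixes v g :: "'a \<Rightarrow> real"
  assumes v: "integrable M v" and g: "g \<in> borel_measurable M"
    and bound: "\<And>x. x \<in> space M \<Longrightarrow> \<bar>g x\<bar> \<le> B"
  shows "integrable M (\<lambda>x. v x * g x)"
proof (rule Bochner_Integration.integrable_bound)
  show "integrable M (\<lambda>x. B * v x)" using v by simp
  show "(\<lambda>x. v x * g x) \<in> borel_measurable M" using v g by measurable
  show "AE x in M. norm (v x * g x) \<le> norm (B * v x)"
  proof (rule AE_I2)
    fix x assume "x \<in> space M"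
    then have "\<bar>g x\<bar> \<le> \<bar>B\<bar>" using bound by (meson abs_ge_self order_trans)
    then have "\<bar>v x\<bar> * \<bar>g x\<bar> \<le> \<bar>v x\<bar> * \<bar>B\<bar>" by (intro mult_left_mono) auto
    then show "norm (v x * g x) \<le> norm (B * v x)" by (simp add: abs_mult mult.commute)
  qed
qed

locale kernel_operator = psd_kernel K X for K :: "'a::metric_space \<Rightarrow> 'a \<Rightarrow> real" and X +
  fixes \<mu> :: "'a measure" and k2 :: real and d :: "nat \<Rightarrow> 'a"
  assumes prob_space_\<mu>: "prob_space \<mu>" and space_\<mu>: "space \<mu> = X"
    and sets_\<mu>: "sets \<mu> = sets (restrict_space borel X)"
    and K_continuous: "continuous_on (X \<times> X) (\<lambda>(x, y). K x y)"
    and K_bounded: "\<And>x y. x \<in> X \<Longrightarrow> y \<in> X \<Longrightarrow> \<bar>K x y\<bar> \<le> k2"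
    and d_in: "\<And>k. d k \<in> X"
    and d_dense: "\<And>x e. x \<in> X \<Longrightarrow> 0 < e \<Longrightarrow> \<exists>k. dist x (d k) < e"
begin

sublocale prob_space \<mu> by (rule prob_space_\<mu>)

lemma k2_nonneg: "0 \<le> k2"
  using K_bounded[OF d_in d_in] by (rule order_trans[OF abs_ge_zero])

lemma K_bounded_mult: "a \<in> X \<Longrightarrow> b \<in> X \<Longrightarrow> norm (c * K a b) \<le> k2 * \<bar>c\<bar>"
  using mult_left_mono[OF K_bounded[of a b], of "\<bar>c\<bar>"] by (simp add: abs_mult mult.commute)

lemma measurable_continuous_on_X: "continuous_on X f \<Longrightarrow> f \<in> borel_measurable \<mu>"
  using borel_measurable_continuous_on_restrict[of X f] measurable_cong_sets[OF sets_\<mu> refl] by blast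

lemma K_measurable_left:
  assumes "y \<in> X" shows "(\<lambda>x. K x y) \<in> borel_measurable \<mu>"
proof (rule measurable_continuous_on_X)
  have "continuous_on X (\<lambda>x. (\<lambda>(x, y). K x y) (x, y))"
    using assms by (intro continuous_on_compose2[OF K_continuous] continuous_intros) auto
  then show "continuous_on X (\<lambda>x. K x y)" by simp
qed

lemma K_measurable_right:
  assumes "y \<in> X" shows "(\<lambda>x. K y x) \<in> borel_measurable \<mu>"
proof (rule measurable_continuous_on_X)
  have "continuous_on X (\<lambda>x. (\<lambda>(x, y). K x y) (y, x))"
    using assms by (intro continuous_on_compose2[OF K_continuous] continuous_intros) auto
  then show "continuous_on X (\<lambda>x. K y x)" by simp
qed

lemma LK_eq: "y \<in> X \<Longrightarrow> LK K \<mu> v y = (\<integral>u. v u * K u y \<partial>\<mu>)"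
  unfolding LK_def by (rule Bochner_Integration.integral_cong) (auto simp: space_\<mu> K_sym)

definition nearest_index :: "nat \<Rightarrow> 'a \<Rightarrow> nat" where
  "nearest_index n u = (LEAST k. k \<le> n \<and> (\<forall>j\<le>n. dist u (d k) \<le> dist u (d j)))"

definition nearest :: "nat \<Rightarrow> 'a \<Rightarrow> 'a" where
  "nearest n u = d (nearest_index n u)"

lemma nearest_index: "nearest_index n u \<le> n \<and> (\<forall>j\<le>n. dist u (nearest n u) \<le> dist u (d j))"
proof -
  let ?D = "(\<lambda>j. dist u (d j)) ` {..n}"
  have "Min ?D \<in> ?D" by (rule Min_in) auto
  then obtain k where "k \<in> {..n}" "Min ?D = dist u (d k)" by (rule imageE)
  moreover have "\<forall>j\<le>n. Min ?D \<le> dist u (d j)" by simp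
  ultimately have "\<exists>k. k \<le> n \<and> (\<forall>j\<le>n. dist u (d k) \<le> dist u (d j))" by auto
  then show ?thesis unfolding nearest_def nearest_index_def by (rule LeastI_ex)
qed

lemma nearest_in: "nearest n u \<in> X"
  by (simp add: nearest_def d_in)

lemma nearest_index_measurable: "nearest_index n \<in> \<mu> \<rightarrow>\<^sub>M count_space UNIV"
proof -
  have [measurable]: "(\<lambda>u. dist u (d j)) \<in> borel_measurable \<mu>" for j
    by (intro measurable_continuous_on_X continuous_intros)
  show ?thesis unfolding nearest_index_def[abs_def] by measurable
qed

lemma measurable_comp_nearest: "(\<lambda>u. \<phi> (nearest n u)) \<in> borel_measurable \<mu>"
  unfolding nearest_def
  by (rule measurable_compose_countable[where f="\<lambda>i x. \<phi> (d i)", OF _ nearest_index_measurable]) simp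

lemma nearest_tendsto:
  assumes u: "u \<in> X" and m: "filterlim m at_top sequentially"
  shows "(\<lambda>i. nearest (m i) u) \<longlonglongrightarrow> u"
proof (rule tendstoI)
  fix e :: real assume "0 < e"
  then obtain k where k: "dist u (d k) < e" using d_dense[OF u] by blast
  have "eventually (\<lambda>i. k \<le> m i) sequentially" using m by (simp add: filterlim_at_top)
  then show "eventually (\<lambda>i. dist (nearest (m i) u) u < e) sequentially"
  proof eventually_elim
    fix i assume "k \<le> m i"
    then have "dist u (nearest (m i) u) \<le> dist u (d k)" using nearest_index by blast
    then show "dist (nearest (m i) u) u < e" using k by (simp add: dist_commute)
  qed
qed

definition quantized :: "('a \<Rightarrow> real) \<Rightarrow> nat \<Rightarrow> (real \<times> 'a) list" where
  "quantized v n =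
     map (\<lambda>k. (\<integral>u. v u * indicator {u \<in> space \<mu>. nearest_index n u = k} u \<partial>\<mu>, d k)) [0..<Suc n]"

lemma centers_quantized: "snd ` set (quantized v n) \<subseteq> X"
  by (auto simp: quantized_def d_in)

lemma sum_list_quantized:
  assumes v: "integrable \<mu> v"
  shows "(\<Sum>x\<leftarrow>quantized v n. fst x * \<phi> (snd x)) = (\<integral>u. v u * \<phi> (nearest n u) \<partial>\<mu>)"
proof -
  define cell where "cell k = {u \<in> space \<mu>. nearest_index n u = k}" for k
  have cell: "cell k \<in> sets \<mu>" for k
    using measurable_sets[OF nearest_index_measurable, of "{k}"]
    by (simp add: cell_def vimage_def Int_def conj_commute)
  have "(\<Sum>x\<leftarrow>quantized v n. fst x * \<phi> (snd x))
      = (\<Sum>k<Suc n. \<integral>u. v u * indicator (cell k) u * \<phi> (d k) \<partial>\<mu>)"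
    by (simp add: quantized_def cell_def interv_sum_list_conv_sum_set_nat o_def lessThan_atLeast0)
  also have "\<dots> = (\<integral>u. (\<Sum>k<Suc n. v u * indicator (cell k) u * \<phi> (d k)) \<partial>\<mu>)"
    using integrable_real_mult_indicator[OF cell v] by (intro Bochner_Integration.integral_sum[symmetric]) auto
  also have "\<dots> = (\<integral>u. v u * \<phi> (nearest n u) \<partial>\<mu>)"
  proof (rule Bochner_Integration.integral_cong[OF refl])
    fix u assume "u \<in> space \<mu>"
    then have "(\<Sum>k<Suc n. v u * indicator (cell k) u * \<phi> (d k))
        = (\<Sum>k<Suc n. if k = nearest_index n u then v u * \<phi> (d k) else 0)"
      by (intro sum.cong) (auto simp: cell_def)
    also have "\<dots> = v u * \<phi> (nearest n u)"
      using nearest_index[of n u] by (simp add: nearest_def)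
    finally show "(\<Sum>k<Suc n. v u * indicator (cell k) u * \<phi> (d k)) = v u * \<phi> (nearest n u)" .
  qed
  finally show ?thesis .
qed

lemma kcomb_fun_quantized:
  "integrable \<mu> v \<Longrightarrow> kcomb_fun K (quantized v n) y = (\<integral>u. v u * K (nearest n u) y \<partial>\<mu>)"
  unfolding kcomb_fun_def case_prod_unfold by (rule sum_list_quantized)

lemma kcomb_inner_quantized:
  "integrable \<mu> v \<Longrightarrow> kcomb_inner K A (quantized v n) = (\<integral>u. v u * kcomb_fun K A (nearest n u) \<partial>\<mu>)"
  unfolding kcomb_inner_eq_sum_kcomb_fun case_prod_unfold by (rule sum_list_quantized)

lemma kcomb_fun_quantized_bound:
  assumes v: "integrable \<mu> v" and y: "y \<in> X"
  shows "\<bar>kcomb_fun K (quantized v n) y\<bar> \<le> k2 * (\<integral>u. \<bar>v u\<bar> \<partial>\<mu>)"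
proof -
  have "\<bar>kcomb_fun K (quantized v n) y\<bar> \<le> (\<integral>u. \<bar>v u * K (nearest n u) y\<bar> \<partial>\<mu>)"
    unfolding kcomb_fun_quantized[OF v] by (rule integral_abs_bound)
  also have "\<dots> \<le> (\<integral>u. k2 * \<bar>v u\<bar> \<partial>\<mu>)"
  proof (rule integral_mono)
    show "integrable \<mu> (\<lambda>u. \<bar>v u * K (nearest n u) y\<bar>)"
      using K_bounded nearest_in y
      by (intro integrable_abs integrable_mult_bounded[OF v measurable_comp_nearest]) auto
  qed (use v y nearest_in K_bounded_mult[of _ y] in auto)
  finally show ?thesis by simp
qed

lemma kcomb_fun_quantized_tendsto:
  assumes v: "integrable \<mu> v" and m: "filterlim m at_top sequentially"
    and y: "\<And>i. y i \<in> X" and y0: "y \<longlonglongrightarrow> y0" "y0 \<in> X"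
  shows "(\<lambda>i. kcomb_fun K (quantized v (m i)) (y i)) \<longlonglongrightarrow> LK K \<mu> v y0"
proof -
  have "(\<lambda>i. \<integral>u. v u * K (nearest (m i) u) (y i) \<partial>\<mu>) \<longlonglongrightarrow> (\<integral>u. v u * K u y0 \<partial>\<mu>)"
  proof (rule integral_dominated_convergence[where w="\<lambda>u. k2 * \<bar>v u\<bar>"])
    show "AE u in \<mu>. (\<lambda>i. v u * K (nearest (m i) u) (y i)) \<longlonglongrightarrow> v u * K u y0"
    proof (rule AE_I2)
      fix u assume "u \<in> space \<mu>"
      then have u: "u \<in> X" by (simp add: space_\<mu>)
      have "(\<lambda>i. (nearest (m i) u, y i)) \<longlonglongrightarrow> (u, y0)"
        by (intro tendsto_Pair nearest_tendsto[OF u m] y0)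
      then have "(\<lambda>i. (\<lambda>(x, y). K x y) (nearest (m i) u, y i)) \<longlonglongrightarrow> (\<lambda>(x, y). K x y) (u, y0)"
        using u y y0 nearest_in by (intro continuous_on_tendsto_compose[OF K_continuous]) auto
      then show "(\<lambda>i. v u * K (nearest (m i) u) (y i)) \<longlonglongrightarrow> v u * K u y0"
        by (intro tendsto_mult tendsto_const) simp
    qed
    show "(\<lambda>u. v u * K (nearest (m i) u) (y i)) \<in> borel_measurable \<mu>" for i
      using v measurable_comp_nearest[of "\<lambda>a. K a (y i)"] by (intro borel_measurable_times) auto
  qed (use v y y0 nearest_in K_bounded_mult K_measurable_left measurable_comp_nearest in auto)
  then show ?thesis using y0 by (simp add: kcomb_fun_quantized[OF v] LK_eq)
qed

lemma kcomb_fun_measurable: "snd ` set A \<subseteq> X \<Longrightarrow> kcomb_fun K A \<in> borel_measurable \<mu>"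
proof (induction A)
  case (Cons a A)
  then have "(\<lambda>y. fst a * K (snd a) y + kcomb_fun K A y) \<in> borel_measurable \<mu>"
    using K_measurable_right by (intro borel_measurable_add borel_measurable_times) auto
  then show ?case by (simp add: kcomb_fun_def case_prod_unfold)
qed (simp add: kcomb_fun_def)

lemma kcomb_fun_quantized_tendsto_pointwise:
  "integrable \<mu> v \<Longrightarrow> y \<in> X \<Longrightarrow> (\<lambda>n. kcomb_fun K (quantized v n) y) \<longlonglongrightarrow> LK K \<mu> v y"
  using kcomb_fun_quantized_tendsto[OF _ filterlim_ident, of v "\<lambda>_. y" y] by simp

lemma LK_measurable:
  assumes v: "integrable \<mu> v" shows "LK K \<mu> v \<in> borel_measurable \<mu>"
proof (rule borel_measurable_LIMSEQ_real)
  show "(\<lambda>n. kcomb_fun K (quantized v n) y) \<longlonglongrightarrow> LK K \<mu> v y" if "y \<in> space \<mu>" for y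
    using that by (intro kcomb_fun_quantized_tendsto_pointwise[OF v]) (simp add: space_\<mu>)
qed (rule kcomb_fun_measurable[OF centers_quantized])

lemma LK_bound:
  assumes v: "integrable \<mu> v" and y: "y \<in> X"
  shows "\<bar>LK K \<mu> v y\<bar> \<le> k2 * (\<integral>u. \<bar>v u\<bar> \<partial>\<mu>)"
proof (rule LIMSEQ_le_const2)
  show "(\<lambda>n. \<bar>kcomb_fun K (quantized v n) y\<bar>) \<longlonglongrightarrow> \<bar>LK K \<mu> v y\<bar>"
    by (intro tendsto_rabs kcomb_fun_quantized_tendsto_pointwise v y)
qed (use kcomb_fun_quantized_bound[OF v y] in blast)

definition energy :: "('a \<Rightarrow> real) \<Rightarrow> real" where
  "energy v = (\<integral>u. v u * LK K \<mu> v u \<partial>\<mu>)"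

lemma kcomb_inner_quantized_tendsto:
  assumes v: "integrable \<mu> v"
    and m: "filterlim m at_top sequentially" and n: "filterlim n at_top sequentially"
  shows "(\<lambda>i. kcomb_inner K (quantized v (m i)) (quantized v (n i))) \<longlonglongrightarrow> energy v"
proof -
  define B where "B = k2 * (\<integral>u. \<bar>v u\<bar> \<partial>\<mu>)"
  have "(\<lambda>i. \<integral>u. v u * kcomb_fun K (quantized v (m i)) (nearest (n i) u) \<partial>\<mu>)
        \<longlonglongrightarrow> (\<integral>u. v u * LK K \<mu> v u \<partial>\<mu>)"
  proof (rule integral_dominated_convergence[where w="\<lambda>u. B * \<bar>v u\<bar>"])
    show "AE u in \<mu>. (\<lambda>i. v u * kcomb_fun K (quantized v (m i)) (nearest (n i) u)) \<longlonglongrightarrow> v u * LK K \<mu> v u"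
      using kcomb_fun_quantized_tendsto[OF v m nearest_in nearest_tendsto[OF _ n]]
      by (intro AE_I2 tendsto_mult tendsto_const) (auto simp: space_\<mu>)
    show "AE u in \<mu>. norm (v u * kcomb_fun K (quantized v (m i)) (nearest (n i) u)) \<le> B * \<bar>v u\<bar>" for i
      using kcomb_fun_quantized_bound[OF v nearest_in]
      by (intro AE_I2) (simp add: B_def abs_mult mult.commute mult_left_mono)
    show "(\<lambda>u. v u * kcomb_fun K (quantized v (m i)) (nearest (n i) u)) \<in> borel_measurable \<mu>" for i
      using v measurable_comp_nearest by (intro borel_measurable_times) auto
  qed (use v LK_measurable[OF v] in auto)
  then show ?thesis by (simp add: kcomb_inner_quantized[OF v] energy_def)
qed

lemma kcomb_sq_quantized_tendsto: "integrable \<mu> v \<Longrightarrow> (\<lambda>n. kcomb_sq K (quantized v n)) \<longlonglongrightarrow> energy v"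
  using kcomb_inner_quantized_tendsto[OF _ filterlim_ident filterlim_ident] by (simp add: kcomb_sq_eq_inner)

lemma energy_nonneg: "integrable \<mu> v \<Longrightarrow> 0 \<le> energy v"
  using K_psd[OF centers_quantized] by (intro LIMSEQ_le_const[OF kcomb_sq_quantized_tendsto]) auto

lemma rkhs_approx_quantized:
  assumes v: "integrable \<mu> v"
  shows "rkhs_approx K X (LK K \<mu> v) (quantized v)"
  unfolding rkhs_approx_def
proof (intro conjI allI impI ballI centers_quantized kcomb_fun_quantized_tendsto_pointwise[OF v])
  fix e :: real assume "0 < e"
  show "\<exists>N. \<forall>m\<ge>N. \<forall>n\<ge>N. kcomb_sq K (quantized v m @ kcomb_neg (quantized v n)) < e"
  proof (rule ccontr)
    assume "\<not> ?thesis"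
    then obtain m n where mn: "\<And>N. N \<le> m N \<and> N \<le> n N \<and> e \<le> kcomb_sq K (quantized v (m N) @ kcomb_neg (quantized v (n N)))"
      by (metis not_less)
    have "filterlim m at_top sequentially" "filterlim n at_top sequentially"
      using mn by (auto intro: filterlim_at_top_mono[OF filterlim_ident])
    then have "(\<lambda>N. kcomb_sq K (quantized v (m N) @ kcomb_neg (quantized v (n N))))
               \<longlonglongrightarrow> energy v - energy v - energy v + energy v"
      unfolding kcomb_sq_diff by (intro tendsto_intros kcomb_inner_quantized_tendsto[OF v])
    then have "e \<le> 0" using mn by (intro LIMSEQ_le_const) auto
    then show False using \<open>0 < e\<close> by simp
  qed
qed

lemma in_rkhs_LK: "integrable \<mu> v \<Longrightarrow> in_rkhs K X (LK K \<mu> v)"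
  unfolding in_rkhs_def using rkhs_approx_quantized by blast

lemma rkhs_norm_LK:
  assumes v: "integrable \<mu> v" shows "rkhs_norm K X (LK K \<mu> v) = sqrt (energy v)"
proof (rule rkhs_norm_eq[OF rkhs_approx_quantized[OF v]])
  show "(\<lambda>n. kcomb_norm K (quantized v n)) \<longlonglongrightarrow> sqrt (energy v)"
    unfolding kcomb_norm_def by (intro tendsto_real_sqrt kcomb_sq_quantized_tendsto v)
qed

lemma LK_sq_le_energy:
  assumes v: "integrable \<mu> v" and y: "y \<in> X"
  shows "(LK K \<mu> v y)\<^sup>2 \<le> k2 * energy v"
proof -
  have "(LK K \<mu> v y)\<^sup>2 \<le> K y y * energy v"
    using kcomb_fun_quantized_tendsto_pointwise[OF v y] kcomb_sq_quantized_tendsto[OF v]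
      kcomb_fun_sq_le[OF centers_quantized y]
    by (intro LIMSEQ_le[OF tendsto_power tendsto_mult[OF tendsto_const]]) auto
  also have "\<dots> \<le> k2 * energy v"
    using K_bounded[OF y y] energy_nonneg[OF v] by (intro mult_right_mono) auto
  finally show ?thesis .
qed

lemma square_integrable_LK:
  assumes g: "square_integrable \<mu> g" shows "square_integrable \<mu> (LK K \<mu> g)"
  using square_integrable_integrable[OF g] LK_bound
  by (intro square_integrable_AE_bounded LK_measurable AE_I2) (auto simp: space_\<mu>)

lemma LK_linear:
  assumes u: "integrable \<mu> u" and w: "integrable \<mu> w" and y: "y \<in> X"
  shows "LK K \<mu> (\<lambda>x. a * u x + b * w x) y = a * LK K \<mu> u y + b * LK K \<mu> w y"
proof -
  have "integrable \<mu> (\<lambda>x. f x * K x y)" if "integrable \<mu> f" for f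
    using that K_bounded y by (intro integrable_mult_bounded K_measurable_left) (auto simp: space_\<mu>)
  then show ?thesis
    using u w y by (simp add: LK_eq distrib_right mult.assoc)
qed

lemma L2norm_contraction:
  assumes g: "square_integrable \<mu> g" and \<gamma>: "0 \<le> \<gamma>" "\<gamma> * k2 \<le> c"
  shows "L2norm \<mu> (\<lambda>x. c * g x - \<gamma> * LK K \<mu> g x) \<le> c * L2norm \<mu> g"
proof -
  have gi: "integrable \<mu> g" by (rule square_integrable_integrable[OF g])
  have Lg: "square_integrable \<mu> (LK K \<mu> g)" by (rule square_integrable_LK[OF g])
  have c: "0 \<le> c" using \<gamma> k2_nonneg by (meson mult_nonneg_nonneg order_trans)
  have E: "0 \<le> energy g" by (rule energy_nonneg[OF gi])
  have LK_L2_sq: "(\<integral>x. (LK K \<mu> g x)\<^sup>2 \<partial>\<mu>) \<le> k2 * energy g"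
    using Lg LK_sq_le_energy[OF gi] integral_mono[of \<mu> "\<lambda>x. (LK K \<mu> g x)\<^sup>2" "\<lambda>_. k2 * energy g"]
    by (simp add: square_integrable_def space_\<mu> prob_space[unfolded space_\<mu>])
  have LK_term: "\<gamma>\<^sup>2 * (\<integral>x. (LK K \<mu> g x)\<^sup>2 \<partial>\<mu>) \<le> \<gamma> * c * energy g"
  proof -
    have "\<gamma>\<^sup>2 * (\<integral>x. (LK K \<mu> g x)\<^sup>2 \<partial>\<mu>) \<le> \<gamma>\<^sup>2 * (k2 * energy g)"
      using LK_L2_sq by (rule mult_left_mono) simp
    also have "\<dots> = \<gamma> * ((\<gamma> * k2) * energy g)" by (simp add: power2_eq_square)
    also have "\<dots> \<le> \<gamma> * (c * energy g)" using \<gamma> E by (intro mult_left_mono mult_right_mono) auto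
    finally show ?thesis by simp
  qed
  have "(L2norm \<mu> (\<lambda>x. c * g x - \<gamma> * LK K \<mu> g x))\<^sup>2
      = (\<integral>x. c\<^sup>2 * (g x)\<^sup>2 - 2 * c * \<gamma> * (g x * LK K \<mu> g x) + \<gamma>\<^sup>2 * (LK K \<mu> g x)\<^sup>2 \<partial>\<mu>)"
    unfolding L2norm_sq by (simp add: power2_eq_square algebra_simps)
  also have "\<dots> = c\<^sup>2 * (L2norm \<mu> g)\<^sup>2 - 2 * c * \<gamma> * energy g + \<gamma>\<^sup>2 * (\<integral>x. (LK K \<mu> g x)\<^sup>2 \<partial>\<mu>)"
    using g Lg square_integrable_mult[OF g Lg] by (simp add: square_integrable_def L2norm_sq energy_def)
  also have "\<dots> \<le> (c * L2norm \<mu> g)\<^sup>2"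
    using LK_term mult_nonneg_nonneg[OF mult_nonneg_nonneg[OF c \<gamma>(1)] E]
    by (simp add: power_mult_distrib algebra_simps)
  finally show ?thesis
    by (rule power2_le_imp_le) (intro mult_nonneg_nonneg c L2norm_nonneg)
qed

end

section \<open>The sampling distribution\<close>

lemma space_marginal: "space (marginal rho X) = X"
  by (simp add: marginal_def space_restrict_space)

lemma sets_marginal: "sets (marginal rho X) = sets (restrict_space borel X)"
  by (simp add: marginal_def sets_restrict_space)

lemma support_null_set:
  fixes X :: "'a::euclidean_space set" and rho :: "('a \<times> real) measure"
  assumes "closed X" "sets rho = sets (borel :: ('a \<times> real) measure)"
    and "emeasure rho (UNIV - X \<times> {-M..M}) = 0"
  shows "UNIV - X \<times> {-M..M} \<in> null_sets rho"
proof -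
  have "X \<times> {-M..M} \<in> sets rho" using assms(1,2) by (simp add: closed_Times)
  then have "UNIV - X \<times> {-M..M} \<in> sets rho"
    using sets.compl_sets sets_eq_imp_space_eq[OF assms(2)] by fastforce
  then show ?thesis using assms(3) by (simp add: null_sets_def)
qed

lemma prob_space_marginal:
  fixes X :: "'a::euclidean_space set" and rho :: "('a \<times> real) measure"
  assumes X: "closed X" and rho: "prob_space rho" and sets_rho: "sets rho = sets (borel :: ('a \<times> real) measure)"
    and supp: "emeasure rho (UNIV - X \<times> {-M..M}) = 0"
  shows "prob_space (marginal rho X)"
proof -
  have "fst \<in> (borel :: ('a \<times> real) measure) \<rightarrow>\<^sub>M borel"
    by (intro borel_measurable_continuous_onI continuous_on_fst continuous_on_id)
  then have fst: "fst \<in> rho \<rightarrow>\<^sub>M borel" using measurable_cong_sets[OF sets_rho refl] by blast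
  have "AE z in rho. z \<in> X \<times> UNIV"
    by (rule AE_I'[OF support_null_set[OF X sets_rho supp]]) auto
  then have "emeasure rho (X \<times> UNIV) = 1"
    using X by (intro prob_space.emeasure_eq_1_AE[OF rho]) (auto simp: sets_rho closed_Times)
  moreover have "fst -` X \<inter> space rho = X \<times> UNIV" using sets_eq_imp_space_eq[OF sets_rho] by auto
  ultimately have "emeasure (distr rho borel fst) X = 1"
    using X by (simp add: emeasure_distr[OF fst])
  then show ?thesis
    unfolding marginal_def using X by (intro prob_space_restrict_space) auto
qed

lemma regr_measurable:
  assumes "condY \<in> marginal rho X \<rightarrow>\<^sub>M subprob_algebra borel"
  shows "regr condY \<in> borel_measurable (marginal rho X)"
  unfolding regr_def[abs_def]
  by (rule measurable_compose[OF assms integral_measurable_subprob_algebra]) simp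

lemma regr_AE_bounded:
  fixes X :: "'a::euclidean_space set" and rho :: "('a \<times> real) measure"
  assumes X: "closed X" and sets_rho: "sets rho = sets (borel :: ('a \<times> real) measure)"
    and supp: "emeasure rho (UNIV - X \<times> {-M..M}) = 0"
    and cond_prob: "\<forall>x\<in>X. prob_space (condY x) \<and> sets (condY x) = sets (borel :: real measure)"
    and cond_meas: "condY \<in> marginal rho X \<rightarrow>\<^sub>M subprob_algebra borel"
    and disint: "\<forall>A\<in>sets (marginal rho X). \<forall>B\<in>sets (borel :: real measure).
                   emeasure rho (A \<times> B) = (\<integral>\<^sup>+x. indicator A x * emeasure (condY x) B \<partial>marginal rho X)"
  shows "AE x in marginal rho X. \<bar>regr condY x\<bar> \<le> M"
proof -
  define B where "B = (UNIV - {-M..M} :: real set)"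
  have B: "B \<in> sets borel" by (simp add: B_def)
  have "emeasure rho (X \<times> B) \<le> emeasure rho (UNIV - X \<times> {-M..M})"
    using support_null_set[OF X sets_rho supp] by (intro emeasure_mono) (auto simp: B_def)
  then have "emeasure rho (X \<times> B) = 0" using supp by simp
  moreover have "X \<in> sets (marginal rho X)" using sets.top[of "marginal rho X"] by (simp add: space_marginal)
  ultimately have "(\<integral>\<^sup>+x. indicator X x * emeasure (condY x) B \<partial>marginal rho X) = 0"
    using disint B by simp
  also have "(\<integral>\<^sup>+x. indicator X x * emeasure (condY x) B \<partial>marginal rho X)
      = (\<integral>\<^sup>+x. emeasure (condY x) B \<partial>marginal rho X)"
    by (rule nn_integral_cong) (simp add: space_marginal)
  finally have "(\<integral>\<^sup>+x. emeasure (condY x) B \<partial>marginal rho X) = 0" .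
  moreover have "(\<lambda>x. emeasure (condY x) B) \<in> borel_measurable (marginal rho X)"
    by (rule measurable_compose[OF cond_meas measurable_emeasure_subprob_algebra[OF B]])
  ultimately have "AE x in marginal rho X. emeasure (condY x) B = 0"
    by (simp add: nn_integral_0_iff_AE)
  then show ?thesis
  proof (rule AE_mp, intro AE_I2 impI)
    fix x assume "x \<in> space (marginal rho X)" and null: "emeasure (condY x) B = 0"
    then have P: "prob_space (condY x)" "sets (condY x) = sets borel"
      using cond_prob by (auto simp: space_marginal)
    then have bound: "AE y in condY x. \<bar>y\<bar> \<le> M"
      using null B by (intro AE_I'[of B]) (auto simp: null_sets_def B_def)
    have "\<bar>regr condY x\<bar> \<le> (\<integral>y. \<bar>y\<bar> \<partial>condY x)"
      unfolding regr_def by (rule integral_abs_bound)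
    also have "\<dots> \<le> (\<integral>y. M \<partial>condY x)"
      using bound prob_space.finite_measure[OF P(1)]
      by (intro integral_mono_AE') (auto elim: eventually_mono intro: finite_measure.integrable_const)
    also have "\<dots> = M" using prob_space.prob_space[OF P(1)] by simp
    finally show "\<bar>regr condY x\<bar> \<le> M" .
  qed
qed

lemma psd_kernel_mercer: "mercer_kernel K X \<Longrightarrow> psd_kernel K X"
  by unfold_locales (auto simp: mercer_kernel_def)

lemma mercer_kernel_bounded:
  assumes mercer: "mercer_kernel K X" and bdd: "bdd_above ((\<lambda>x. K x x) ` X)"
    and x: "x \<in> X" and y: "y \<in> X"
  shows "\<bar>K x y\<bar> \<le> (kappa K X)\<^sup>2"
proof -
  interpret psd_kernel K X by (rule psd_kernel_mercer[OF mercer])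
  have diag: "0 \<le> K z z \<and> K z z \<le> (kappa K X)\<^sup>2" if z: "z \<in> X" for z
  proof
    show "0 \<le> K z z" using K_psd[of "[(1, z)]"] z by (simp add: kcomb_sq_def)
    have "bdd_above ((\<lambda>x. sqrt (K x x)) ` X)"
      using bdd by (auto simp: bdd_above_def intro: real_sqrt_le_mono)
    then have "sqrt (K z z) \<le> kappa K X" unfolding kappa_def by (rule cSUP_upper[OF z])
    then show "K z z \<le> (kappa K X)\<^sup>2"
      using \<open>0 \<le> K z z\<close> by (metis real_sqrt_ge_zero real_sqrt_le_iff real_sqrt_pow2 power_mono)
  qed
  have "(K x y)\<^sup>2 \<le> K y y * K x x"
    using kcomb_fun_sq_le[of "[(1, x)]" y] x y by (simp add: kcomb_fun_def kcomb_sq_def)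
  also have "\<dots> \<le> ((kappa K X)\<^sup>2)\<^sup>2"
    using diag[OF x] diag[OF y] by (simp add: power2_eq_square mult_mono)
  finally have "\<bar>K x y\<bar> \<le> \<bar>(kappa K X)\<^sup>2\<bar>" unfolding abs_le_square_iff .
  then show ?thesis by simp
qed

lemma dense_sequence:
  fixes X :: "'a::{metric_space, second_countable_topology} set"
  assumes "X \<noteq> {}"
  obtains d :: "nat \<Rightarrow> 'a" where "\<And>k. d k \<in> X" "\<And>x e. x \<in> X \<Longrightarrow> 0 < e \<Longrightarrow> \<exists>k. dist x (d k) < e"
proof -
  obtain T where T: "countable T" "T \<subseteq> X" "X \<subseteq> closure T" by (rule separable)
  with assms have "T \<noteq> {}" by auto
  show ?thesis
  proof (rule that[of "from_nat_into T"])
    show "from_nat_into T k \<in> X" for k using from_nat_into[OF \<open>T \<noteq> {}\<close>] T(2) by blast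
    fix x and e :: real assume "x \<in> X" "0 < e"
    then obtain t where "t \<in> T" "dist t x < e" using T(3) closure_approachable by blast
    then show "\<exists>k. dist x (from_nat_into T k) < e"
      using from_nat_into_surj[OF T(1)] by (metis dist_commute)
  qed
qed

lemma kernel_operator_marginal:
  fixes X :: "'a::euclidean_space set" and rho :: "('a \<times> real) measure"
  assumes X: "closed X" and rho: "prob_space rho" and sets_rho: "sets rho = sets (borel :: ('a \<times> real) measure)"
    and supp: "emeasure rho (UNIV - X \<times> {-M..M}) = 0"
    and mercer: "mercer_kernel K X" and bdd: "bdd_above ((\<lambda>x. K x x) ` X)"
  obtains d where "kernel_operator K X (marginal rho X) ((kappa K X)\<^sup>2) d"
proof -
  note P = prob_space_marginal[OF X rho sets_rho supp]
  then have "X \<noteq> {}" using prob_space.not_empty[OF P] by (simp add: space_marginal)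
  then obtain d :: "nat \<Rightarrow> 'a" where "\<And>k. d k \<in> X" "\<And>x e. x \<in> X \<Longrightarrow> 0 < e \<Longrightarrow> \<exists>k. dist x (d k) < e"
    using dense_sequence by blast
  then have "kernel_operator K X (marginal rho X) ((kappa K X)\<^sup>2) d"
    using P mercer mercer_kernel_bounded[OF mercer bdd]
    by (intro kernel_operator.intro psd_kernel_mercer kernel_operator_axioms.intro)
      (auto simp: space_marginal sets_marginal mercer_kernel_def)
  then show ?thesis by (rule that)
qed

section \<open>The regularized iteration\<close>

lemma gam_pos: "0 < a \<Longrightarrow> 0 < t0 \<Longrightarrow> 0 < gam a \<theta> t0 t"
  by (simp add: gam_def)

lemma lam_pos: "0 < b \<Longrightarrow> 0 < t0 \<Longrightarrow> 0 < lam b \<theta> t0 t"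
  by (simp add: lam_def)

lemma lam_Suc_le: "\<theta> \<le> 1 \<Longrightarrow> 0 < t0 \<Longrightarrow> 0 \<le> b \<Longrightarrow> lam b \<theta> t0 (Suc t) \<le> lam b \<theta> t0 t"
  unfolding lam_def by (intro mult_left_mono powr_mono2') auto

lemma gam_mult_lam:
  assumes "0 < t0" shows "gam a \<theta> t0 t * lam b \<theta> t0 t = a * b / (real t + t0)"
proof -
  have "gam a \<theta> t0 t * lam b \<theta> t0 t = a * b * ((real t + t0) powr (- \<theta>) * (real t + t0) powr (- (1 - \<theta>)))"
    by (simp add: gam_def lam_def algebra_simps)
  also have "\<dots> = a * b * (real t + t0) powr (- 1)" by (simp add: powr_add[symmetric])
  finally show ?thesis using assms by (simp add: powr_minus_divide)
qed

lemma gam_Suc_step_le: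
  assumes \<theta>: "0 \<le> \<theta>" "\<theta> \<le> 1" and t0: "0 < t0" and a: "0 < a" and b: "0 < b" and k2: "0 \<le> k2"
    and t0_big: "a * (k2 + b) \<le> t0 powr \<theta>"
  shows "gam a \<theta> t0 (Suc t) * (k2 + lam b \<theta> t0 (Suc t)) \<le> 1"
proof -
  define x where "x = real (Suc t) + t0"
  have "t0 powr \<theta> \<le> x"
  proof (cases "1 \<le> t0")
    case True
    then have "t0 powr \<theta> \<le> t0 powr 1" using \<theta> by (intro powr_mono) auto
    then show ?thesis using t0 by (simp add: x_def)
  next
    case False
    then have "t0 powr \<theta> \<le> 1" using \<theta> t0 by (intro powr_le1) auto
    then show ?thesis using t0 by (simp add: x_def)
  qed
  have "gam a \<theta> t0 (Suc t) * k2 = a * k2 * x powr (- \<theta>)" by (simp add: gam_def x_def)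
  also have "\<dots> \<le> a * k2 * t0 powr (- \<theta>)"
    using \<theta> t0 a k2 by (intro mult_left_mono powr_mono2') (auto simp: x_def)
  finally have "gam a \<theta> t0 (Suc t) * k2 \<le> a * k2 / t0 powr \<theta>" by (simp add: powr_minus_divide)
  moreover have "gam a \<theta> t0 (Suc t) * lam b \<theta> t0 (Suc t) \<le> a * b / t0 powr \<theta>"
    using gam_mult_lam[OF t0] \<open>t0 powr \<theta> \<le> x\<close> a b t0
    by (simp add: x_def) (intro divide_left_mono, auto)
  moreover have "a * k2 / t0 powr \<theta> + a * b / t0 powr \<theta> \<le> 1"
    using t0_big t0 by (simp add: add_divide_distrib[symmetric] algebra_simps)
  ultimately show ?thesis by (simp add: algebra_simps)
qed

primrec wseq :: "(nat \<Rightarrow> 'a \<Rightarrow> real) \<Rightarrow> (nat \<Rightarrow> real) \<Rightarrow> (nat \<Rightarrow> real) \<Rightarrow> nat \<Rightarrow> 'a \<Rightarrow> real" where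
  "wseq g gm lm 0 = (\<lambda>x. 0)"
| "wseq g gm lm (Suc t) = (\<lambda>x. (1 - gm (Suc t) * lm (Suc t)) * wseq g gm lm t x - gm (Suc t) * g t x)"

locale regularized_iteration = kernel_operator K X \<mu> k2 d
  for K :: "'a::metric_space \<Rightarrow> 'a \<Rightarrow> real" and X \<mu> k2 d +
  fixes f :: "'a \<Rightarrow> real" and M :: real and gm lm :: "nat \<Rightarrow> real"
  assumes f_square_integrable: "square_integrable \<mu> f" and f_norm: "L2norm \<mu> f \<le> M"
    and gm_pos: "\<And>t. 0 < gm t" and lm_pos: "\<And>t. 0 < lm t"
    and lm_Suc_le: "\<And>t. lm (Suc t) \<le> lm t"
    and step_le: "\<And>t. gm (Suc t) * (k2 + lm (Suc t)) \<le> 1"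
begin

abbreviation G where "G \<equiv> gseq K \<mu> f gm lm"
abbreviation W where "W \<equiv> wseq G gm lm"

lemma M_nonneg: "0 \<le> M"
  using L2norm_nonneg f_norm by (rule order_trans)

lemma step_weights:
  shows "0 \<le> 1 - gm (Suc t) * lm (Suc t)" and "gm (Suc t) * k2 \<le> 1 - gm (Suc t) * lm (Suc t)"
proof -
  have "0 \<le> gm (Suc t) * k2" using gm_pos[of "Suc t"] k2_nonneg by simp
  then show "0 \<le> 1 - gm (Suc t) * lm (Suc t)" "gm (Suc t) * k2 \<le> 1 - gm (Suc t) * lm (Suc t)"
    using step_le[of t] by (simp_all add: algebra_simps)
qed

lemma gseq_bounded: "square_integrable \<mu> (G t) \<and> L2norm \<mu> (G t) \<le> M"
proof (induction t)
  case 0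
  show ?case using f_square_integrable square_integrable_cmult[of \<mu> f "-1"] f_norm
    by (simp add: L2norm_cmult[of \<mu> "-1", simplified])
next
  case (Suc t)
  define \<gamma> c where "\<gamma> = gm (Suc t)" and "c = 1 - gm (Suc t) * lm (Suc t)"
  define H where "H = (\<lambda>x. c * G t x - \<gamma> * LK K \<mu> (G t) x)"
  have IH: "square_integrable \<mu> (G t)" "L2norm \<mu> (G t) \<le> M" using Suc by auto
  have H: "square_integrable \<mu> H"
    unfolding H_def diff_conv_add_uminus minus_mult_left
    by (intro square_integrable_add square_integrable_cmult square_integrable_LK IH)
  have "L2norm \<mu> H \<le> c * M"
    using L2norm_contraction[OF IH(1), of \<gamma> c] mult_left_mono[OF IH(2), of c] step_weights gm_pos
    by (simp add: H_def \<gamma>_def c_def less_imp_le)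
  have "G (Suc t) = (\<lambda>x. H x + (- (\<gamma> * lm (Suc t))) * f x)"
    unfolding H_def \<gamma>_def c_def by (rule ext) (simp add: algebra_simps)
  moreover have "square_integrable \<mu> (\<lambda>x. H x + (- (\<gamma> * lm (Suc t))) * f x)"
    by (intro square_integrable_add square_integrable_cmult H f_square_integrable)
  moreover have "L2norm \<mu> (\<lambda>x. H x + (- (\<gamma> * lm (Suc t))) * f x) \<le> M"
  proof -
    have "L2norm \<mu> (\<lambda>x. H x + (- (\<gamma> * lm (Suc t))) * f x)
        \<le> L2norm \<mu> H + L2norm \<mu> (\<lambda>x. (- (\<gamma> * lm (Suc t))) * f x)"
      by (intro L2norm_triangle H square_integrable_cmult f_square_integrable)
    also have "\<dots> = L2norm \<mu> H + \<gamma> * lm (Suc t) * L2norm \<mu> f"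
      using L2norm_cmult[of \<mu> "- (\<gamma> * lm (Suc t))" f] gm_pos[of "Suc t"] lm_pos[of "Suc t"]
      by (simp add: \<gamma>_def abs_mult)
    also have "\<dots> \<le> c * M + \<gamma> * lm (Suc t) * M"
      using \<open>L2norm \<mu> H \<le> c * M\<close> f_norm gm_pos lm_pos by (simp add: \<gamma>_def add_mono)
    also have "\<dots> = M" by (simp add: c_def \<gamma>_def algebra_simps)
    finally show ?thesis .
  qed
  ultimately show ?case by simp
qed

lemma wseq_bounded: "square_integrable \<mu> (W t) \<and> L2norm \<mu> (W t) \<le> M / lm t"
proof (induction t)
  case 0
  show ?case using M_nonneg lm_pos[of 0] by (simp add: square_integrable_def L2norm_def)
next
  case (Suc t)
  define \<gamma> l c where "\<gamma> = gm (Suc t)" and "l = lm (Suc t)" and "c = 1 - gm (Suc t) * lm (Suc t)"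
  have IH: "square_integrable \<mu> (W t)" "L2norm \<mu> (W t) \<le> M / lm t" using Suc by auto
  have G: "square_integrable \<mu> (G t)" "L2norm \<mu> (G t) \<le> M" using gseq_bounded by auto
  have c: "0 \<le> c" using step_weights by (simp add: c_def)
  have l: "0 < l" using lm_pos by (simp add: l_def)
  have \<gamma>: "0 < \<gamma>" using gm_pos by (simp add: \<gamma>_def)
  have W: "W (Suc t) = (\<lambda>x. c * W t x + (- \<gamma>) * G t x)" by (simp add: c_def \<gamma>_def)
  have "L2norm \<mu> (W t) \<le> M / l"
    using IH(2) divide_left_mono[OF lm_Suc_le M_nonneg] lm_pos by (simp add: l_def) (meson order_trans mult_pos_pos)
  have "L2norm \<mu> (W (Suc t)) \<le> L2norm \<mu> (\<lambda>x. c * W t x) + L2norm \<mu> (\<lambda>x. (- \<gamma>) * G t x)"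
    unfolding W by (intro L2norm_triangle square_integrable_cmult IH(1) G(1))
  also have "\<dots> = c * L2norm \<mu> (W t) + \<gamma> * L2norm \<mu> (G t)"
    using c \<gamma> L2norm_cmult[of \<mu> c "W t"] L2norm_cmult[of \<mu> "- \<gamma>" "G t"] by simp
  also have "\<dots> \<le> c * (M / l) + \<gamma> * M"
    using \<open>L2norm \<mu> (W t) \<le> M / l\<close> G(2) c \<gamma> by (intro add_mono mult_left_mono) auto
  also have "\<dots> = M / l" using l by (simp add: c_def \<gamma>_def l_def field_simps)
  finally have "L2norm \<mu> (W (Suc t)) \<le> M / lm (Suc t)" by (simp only: l_def)
  moreover have "square_integrable \<mu> (W (Suc t))"
    unfolding W by (intro square_integrable_add square_integrable_cmult IH(1) G(1))
  ultimately show ?case by blast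
qed

lemma gseq_add_f_eq_LK: "x \<in> X \<Longrightarrow> G t x + f x = LK K \<mu> (W t) x"
proof (induction t)
  case 0
  then show ?case by (simp add: LK_def)
next
  case (Suc t)
  define \<gamma> c where "\<gamma> = gm (Suc t)" and "c = 1 - gm (Suc t) * lm (Suc t)"
  have W: "W (Suc t) = (\<lambda>y. c * W t y + (- \<gamma>) * G t y)" by (simp add: c_def \<gamma>_def)
  have "LK K \<mu> (\<lambda>y. c * W t y + (- \<gamma>) * G t y) x = c * LK K \<mu> (W t) x + (- \<gamma>) * LK K \<mu> (G t) x"
    using wseq_bounded gseq_bounded Suc.prems by (intro LK_linear square_integrable_integrable) auto
  then have LK_W: "LK K \<mu> (W (Suc t)) x = c * LK K \<mu> (W t) x + (- \<gamma>) * LK K \<mu> (G t) x"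
    by (simp only: W)
  have "G (Suc t) x + f x = c * (G t x + f x) + (- \<gamma>) * LK K \<mu> (G t) x"
    by (simp add: c_def \<gamma>_def algebra_simps)
  also have "\<dots> = LK K \<mu> (W (Suc t)) x"
    unfolding LK_W Suc.IH[OF Suc.prems] ..
  finally show ?case .
qed

lemma gseq_add_f_in_rkhs: "in_rkhs K X (\<lambda>x. G t x + f x)"
  using in_rkhs_LK[OF square_integrable_integrable] wseq_bounded gseq_add_f_eq_LK
  by (subst in_rkhs_cong) auto

lemma rkhs_norm_gseq_add_f: "rkhs_norm K X (\<lambda>x. G t x + f x) \<le> 3 * M / sqrt (lm t)"
proof -
  have W: "square_integrable \<mu> (W t)" "L2norm \<mu> (W t) \<le> M / lm t" using wseq_bounded by auto
  have G: "square_integrable \<mu> (G t)" "L2norm \<mu> (G t) \<le> M" using gseq_bounded by auto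
  have l: "0 < lm t" by (rule lm_pos)
  have "energy (W t) \<le> L2norm \<mu> (W t) * L2norm \<mu> (LK K \<mu> (W t))"
    using L2norm_Cauchy_Schwarz[OF W(1) square_integrable_LK[OF W(1)]] by (simp add: energy_def)
  also have "L2norm \<mu> (LK K \<mu> (W t)) = L2norm \<mu> (\<lambda>x. G t x + f x)"
    using gseq_add_f_eq_LK by (intro L2norm_cong) (simp add: space_\<mu>)
  also have "\<dots> \<le> 2 * M"
    using L2norm_triangle[OF G(1) f_square_integrable] G(2) f_norm by simp
  finally have "energy (W t) \<le> M / lm t * (2 * M)"
    using W(2) L2norm_nonneg M_nonneg by (meson mult_left_mono mult_right_mono order_trans zero_le_numeral mult_nonneg_nonneg)
  also have "\<dots> \<le> (3 * M / sqrt (lm t))\<^sup>2"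
    using l M_nonneg by (simp add: power_divide field_simps power2_eq_square)
  finally have "sqrt (energy (W t)) \<le> sqrt ((3 * M / sqrt (lm t))\<^sup>2)"
    by (rule real_sqrt_le_mono)
  then have "sqrt (energy (W t)) \<le> 3 * M / sqrt (lm t)"
    using l M_nonneg by simp
  moreover have "rkhs_norm K X (\<lambda>x. G t x + f x) = sqrt (energy (W t))"
    using rkhs_norm_cong[of X "\<lambda>x. G t x + f x" "LK K \<mu> (W t)"] gseq_add_f_eq_LK
      rkhs_norm_LK[OF square_integrable_integrable[OF W(1)]] by simp
  ultimately show ?thesis by simp
qed

end

theorem lemmaB3:
  fixes X :: "'a::euclidean_space set"
    and rho :: "('a \<times> real) measure"
    and condY :: "'a \<Rightarrow> real measure"
    and K :: "'a \<Rightarrow> 'a \<Rightarrow> real"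
    and M \<theta> t0 a b :: real
  assumes X_closed: "closed X"
    and rho_prob: "prob_space rho"
    and rho_sets: "sets rho = sets (borel :: ('a \<times> real) measure)"
    and M_nonneg: "0 \<le> M"
    and rho_supp: "emeasure rho (UNIV - X \<times> {-M..M}) = 0"
    and cond_prob: "\<forall>x\<in>X. prob_space (condY x) \<and> sets (condY x) = sets (borel :: real measure)"
    and cond_meas: "condY \<in> marginal rho X \<rightarrow>\<^sub>M subprob_algebra borel"
    and disint: "\<forall>A\<in>sets (marginal rho X). \<forall>B\<in>sets (borel :: real measure).
                   emeasure rho (A \<times> B) = (\<integral>\<^sup>+x. indicator A x * emeasure (condY x) B \<partial>marginal rho X)"
    and K_mercer: "mercer_kernel K X"
    and K_bdd: "bdd_above ((\<lambda>x. K x x) ` X)"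
    and LK_pos: "\<forall>g. g \<in> borel_measurable (marginal rho X)
                    \<and> integrable (marginal rho X) (\<lambda>x. (g x)\<^sup>2)
                    \<and> (AE x in marginal rho X. LK K (marginal rho X) g x = 0)
                    \<longrightarrow> (AE x in marginal rho X. g x = 0)"
    and \<theta>_range: "0 \<le> \<theta>" "\<theta> \<le> 1"
    and t0_pos: "0 < t0"
    and a_range: "0 < a" "a < t0 powr \<theta>"
    and b_range: "0 < b" "b < t0 powr (1 - \<theta>)"
    and t0_big: "t0 powr \<theta> \<ge> a * ((kappa K X)\<^sup>2 + b)"
  shows "\<forall>t. integrable (marginal rho X) (\<lambda>x. (gseq K (marginal rho X) (regr condY) (gam a \<theta> t0) (lam b \<theta> t0) t x)\<^sup>2)
          \<and> L2norm (marginal rho X) (gseq K (marginal rho X) (regr condY) (gam a \<theta> t0) (lam b \<theta> t0) t) \<le> M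
          \<and> in_rkhs K X (\<lambda>x. gseq K (marginal rho X) (regr condY) (gam a \<theta> t0) (lam b \<theta> t0) t x + regr condY x)
          \<and> rkhs_norm K X (\<lambda>x. gseq K (marginal rho X) (regr condY) (gam a \<theta> t0) (lam b \<theta> t0) t x + regr condY x)
              \<le> 3 * M / sqrt (lam b \<theta> t0 t)"
proof -
  obtain d where "kernel_operator K X (marginal rho X) ((kappa K X)\<^sup>2) d"
    using kernel_operator_marginal[OF X_closed rho_prob rho_sets rho_supp K_mercer K_bdd] by blast
  then interpret kernel_operator K X "marginal rho X" "(kappa K X)\<^sup>2" d .
  have f_bounded: "AE x in marginal rho X. \<bar>regr condY x\<bar> \<le> M"
    by (rule regr_AE_bounded[OF X_closed rho_sets rho_supp cond_prob cond_meas disint])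
  have f: "square_integrable (marginal rho X) (regr condY)"
    using regr_measurable[OF cond_meas] f_bounded by (rule square_integrable_AE_bounded)
  interpret regularized_iteration K X "marginal rho X" "(kappa K X)\<^sup>2" d
    "regr condY" M "gam a \<theta> t0" "lam b \<theta> t0"
  proof
    show "L2norm (marginal rho X) (regr condY) \<le> M"
      using f f_bounded M_nonneg by (rule L2norm_le_AE_bound)
    show "gam a \<theta> t0 (Suc t) * ((kappa K X)\<^sup>2 + lam b \<theta> t0 (Suc t)) \<le> 1" for t
      using \<theta>_range t0_pos a_range(1) b_range(1) t0_big by (intro gam_Suc_step_le) auto
  qed (use f \<theta>_range t0_pos a_range(1) b_range(1) in \<open>auto intro: gam_pos lam_pos lam_Suc_le\<close>)
  show ?thesis
    using gseq_bounded gseq_add_f_in_rkhs rkhs_norm_gseq_add_f by (auto simp: square_integrable_def)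
qed

end
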